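(* Assume $\delta=0$, $k>2$, and that a fraction $b\in(0,1)$ of firms receive patents (no link costs). Then along any sequence of symmetric investment equilibria, $$\lim_{n\to\infty}q^*(0)\,n^{1/k}=\left(\frac{k-1}{b}\right)^{1/k}.$$
   Context: Model (for each number of firms $n\ge 2$). There are $n$ firms $1,\dots,n$; firm $i$ can discover a single idea, also labelled $i$. Fixed parameters: an integer complexity $k\ge 2$, $\delta\in[0,1]$, and a cost function $c:[0,1)\to[0,\infty)$ that is continuously differentiable, increasing and convex with $c(0)=0$ and $c(p)\to\infty$ as $p\to1^-$. A set of $bn$ firms are patented (exogenously); patent status is known. Each firm chooses an investment $p_i\in[0,1)$ and an openness in $[0,1]$; $q_i(1)$ denotes the openness chosen if $i$ has a patent and $q_i(0)$ if not. Idea $i$ is discovered independently with probability $p_i$; $I$ is the set of discovered ideas. With $q_i$ the openness actually used by $i$, the interaction rate is $\iota(q_i,q_j)=q_iq_j$. For each ordered pair $i\neq j$, independently, $i$ learns directly from $j$ with probability $\iota(q_i,q_j)$, and conditional on this, independently with probability $\delta$, $i$ also learns indirectly through $j$; with $\delta=0$, $I_i$ is the set of discovered ideas $j\neq i$ such that $i$ learns directly from $j$. A technology is a $k$-element $t\subseteq I$; firm $j$ knows $t$ if $t\subseteq\{j\}\cup I_j$. Firm $i$ receives $1$ for each technology $t$ such that $i\in t$, $i$ knows $t$, no idea $j\in t$ with $j\neq i$ is patented, and either $i$ is patented or $i$ is the unique firm knowing $t$; payoff is the expected count minus $c(p_i)$. An equilibrium is a pure-strategy Nash equilibrium; an investment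 equilibrium has all $p_i>0$; it is symmetric if all patented firms choose the same action $(p^*(1),q^*(1))$ and all unpatented firms the same action $(p^*(0),q^*(0))$. Sequences are indexed by $n\to\infty$. *)

theory Defs
  imports "HOL-Analysis.Analysis"
begin

text \<open>Innovation / openness model with delta = 0.  Firms (and ideas) are
  indexed by 0,...,n-1.  A profile gives every firm i an investment p i and the
  openness q i it actually uses (i.e. q_i(1) if i is patented, q_i(0) otherwise).\<close>

definition offdiag :: "nat \<Rightarrow> (nat \<times> nat) set" where
  "offdiag n = {(i, j). i < n \<and> j < n \<and> i \<noteq> j}"

text \<open>Probability of the outcome in which exactly the ideas in D are discovered and
  exactly the ordered pairs (i,j) in L are direct-learning links (i learns from j).\<close>
definition outcome_weight ::
  "nat \<Rightarrow> (nat \<Rightarrow> real) \<Rightarrow> (nat \<Rightarrow> real) \<Rightarrow> nat set \<Rightarrow> (nat \<times> nat) set \<Rightarrow> real" where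
  "outcome_weight n p q D L =
     (\<Prod>i<n. if i \<in> D then p i else 1 - p i) *
     (\<Prod>e\<in>offdiag n. if e \<in> L then q (fst e) * q (snd e) else 1 - q (fst e) * q (snd e))"

definition learned :: "nat set \<Rightarrow> (nat \<times> nat) set \<Rightarrow> nat \<Rightarrow> nat set" where
  "learned D L i = {j \<in> D. j \<noteq> i \<and> (i, j) \<in> L}"

definition knows :: "nat set \<Rightarrow> (nat \<times> nat) set \<Rightarrow> nat \<Rightarrow> nat set \<Rightarrow> bool" where
  "knows D L j t \<longleftrightarrow> t \<subseteq> insert j (learned D L j)"

text \<open>Technologies for which firm i receives 1 (P = set of patented firms).\<close>
definition rewarded_techs ::
  "nat \<Rightarrow> nat \<Rightarrow> nat set \<Rightarrow> nat set \<Rightarrow> (nat \<times> nat) set \<Rightarrow> nat \<Rightarrow> nat set set" where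
  "rewarded_techs n k P D L i =
     {t. t \<subseteq> D \<and> card t = k \<and> i \<in> t \<and> knows D L i t \<and>
         (\<forall>j\<in>t. j \<noteq> i \<longrightarrow> j \<notin> P) \<and>
         (i \<in> P \<or> (\<forall>j<n. knows D L j t \<longrightarrow> j = i))}"

definition payoff ::
  "nat \<Rightarrow> nat \<Rightarrow> (real \<Rightarrow> real) \<Rightarrow> nat set \<Rightarrow> (nat \<Rightarrow> real) \<Rightarrow> (nat \<Rightarrow> real) \<Rightarrow> nat \<Rightarrow> real" where
  "payoff n k c P p q i =
     (\<Sum>D\<in>Pow {..<n}. \<Sum>L\<in>Pow (offdiag n).
        outcome_weight n p q D L * real (card (rewarded_techs n k P D L i))) - c (p i)"

definition is_equilibrium ::
  "nat \<Rightarrow> nat \<Rightarrow> (real \<Rightarrow> real) \<Rightarrow> nat set \<Rightarrow> (nat \<Rightarrow> real) \<Rightarrow> (nat \<Rightarrow> real) \<Rightarrow> bool" where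
  "is_equilibrium n k c P p q \<longleftrightarrow>
     (\<forall>i<n. 0 \<le> p i \<and> p i < 1 \<and> 0 \<le> q i \<and> q i \<le> 1) \<and>
     (\<forall>i<n. \<forall>p' q'. 0 \<le> p' \<longrightarrow> p' < 1 \<longrightarrow> 0 \<le> q' \<longrightarrow> q' \<le> 1 \<longrightarrow>
        payoff n k c P (p(i := p')) (q(i := q')) i \<le> payoff n k c P p q i)"

definition symmetric_investment_equilibrium ::
  "nat \<Rightarrow> nat \<Rightarrow> (real \<Rightarrow> real) \<Rightarrow> nat set \<Rightarrow> real \<Rightarrow> real \<Rightarrow> real \<Rightarrow> real \<Rightarrow> bool" where
  "symmetric_investment_equilibrium n k c P p0 q0 p1 q1 \<longleftrightarrow>
     (let p = (\<lambda>i. if i \<in> P then p1 else p0);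
          q = (\<lambda>i. if i \<in> P then q1 else q0)
      in is_equilibrium n k c P p q \<and> (\<forall>i<n. p i > 0))"

definition admissible_cost :: "(real \<Rightarrow> real) \<Rightarrow> bool" where
  "admissible_cost c \<longleftrightarrow>
     (\<exists>c'. (\<forall>x\<in>{0..<1}. (c has_real_derivative c' x) (at x within {0..<1})) \<and>
           continuous_on {0..<1} c') \<and>
     strict_mono_on {0..<1} c \<and> convex_on {0..<1} c \<and> c 0 = 0 \<and>
     filterlim c at_top (at_left 1)"

end

theory Submission
  imports Defs
begin

text \<open>Without indirect learning, the expected number of technologies rewarded to firm \<open>i\<close> is
  a sum, over the \<open>k\<close>-sets \<open>t\<close> containing \<open>i\<close> and no other patented firm, of the probability
  that \<open>t\<close> is discovered, that \<open>i\<close> learns from every other member of \<open>t\<close> and, for unpatented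
  \<open>i\<close>, that no other firm learns all of \<open>t\<close>.  Independence of discoveries and links makes each
  of these an explicit product (the last one by inclusion--exclusion).

  In a symmetric equilibrium a patented firm gains from every link, so \<open>q*(1) = 1\<close>, while the
  payoff of an unpatented firm is proportional to
  \<open>x^(k-1) (1 - x q0^(2k-3))^(k-1) (1 - x q0^(2k-1))^N (1 - x q0^(k-1))^m\<close> in its own openness
  \<open>x\<close>, where \<open>m\<close> firms are patented and \<open>N + k\<close> are not.  At the interior maximum \<open>x = q0\<close>
  the first-order condition reads \<open>k - 1 = (k - 1) a/(1 - a) + N z^2/(1 - z^2) + m z/(1 - z)\<close>
  with \<open>z = q0^k\<close> and \<open>a = q0^(2k-2) \<le> z\<close>.  Hence \<open>m z \<le> k - 1\<close>, so \<open>z \<rightarrow> 0\<close> as \<open>m \<sim> b n\<close>;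
  the first two terms then vanish and \<open>n z \<rightarrow> (k - 1)/b\<close>.\<close>

definition bernoulli_weight :: "'a set \<Rightarrow> ('a \<Rightarrow> real) \<Rightarrow> 'a set \<Rightarrow> real" where
  "bernoulli_weight S \<pi> A = (\<Prod>s\<in>S. if s \<in> A then \<pi> s else 1 - \<pi> s)"

lemma prod_if_mem_eq:
  fixes f g :: "'a \<Rightarrow> 'b::comm_monoid_mult"
  assumes "finite S" "X \<subseteq> S"
  shows "(\<Prod>s\<in>S. if s \<in> X then f s else g s) = prod f X * prod g (S - X)"
proof -
  have "(\<Prod>s\<in>S. if s \<in> X then f s else g s)
      = (\<Prod>s\<in>X. if s \<in> X then f s else g s) * (\<Prod>s\<in>S - X. if s \<in> X then f s else g s)"
    using prod.subset_diff[OF assms(2,1), of "\<lambda>s. if s \<in> X then f s else g s"]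
    by (simp add: mult.commute)
  also have "\<dots> = prod f X * prod g (S - X)"
    by (intro arg_cong2[where f = "(*)"] prod.cong) auto
  finally show ?thesis .
qed

lemma prod_of_bool_eq:
  "finite J \<Longrightarrow> (\<Prod>j\<in>J. (of_bool (Q j) :: real)) = of_bool (\<forall>j\<in>J. Q j)"
  by (induction J rule: finite_induct) auto

lemma sum_bernoulli_weight_superset:
  assumes "finite S" "E \<subseteq> S"
  shows "(\<Sum>A\<in>Pow S. bernoulli_weight S \<pi> A * of_bool (E \<subseteq> A)) = prod \<pi> E"
proof -
  define g where "g s = (if s \<in> E then 0 else 1 - \<pi> s)" for s
  have "prod \<pi> E = (\<Prod>s\<in>S. if s \<in> E then \<pi> s else 1)"
    using prod_if_mem_eq[OF assms, of \<pi> "\<lambda>_. 1"] by simp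
  also have "\<dots> = (\<Prod>s\<in>S. \<pi> s + g s)"
    by (rule prod.cong) (auto simp: g_def)
  also have "\<dots> = (\<Sum>X\<in>Pow S. prod \<pi> X * prod g (S - X))"
    by (rule prod_add[OF assms(1)])
  also have "\<dots> = (\<Sum>A\<in>Pow S. bernoulli_weight S \<pi> A * of_bool (E \<subseteq> A))"
  proof (rule sum.cong[OF refl])
    fix X assume X: "X \<in> Pow S"
    show "prod \<pi> X * prod g (S - X) = bernoulli_weight S \<pi> X * of_bool (E \<subseteq> X)"
    proof (cases "E \<subseteq> X")
      case True
      then have "prod g (S - X) = (\<Prod>s\<in>S - X. 1 - \<pi> s)"
        by (intro prod.cong) (auto simp: g_def)
      then show ?thesis
        using prod_if_mem_eq[OF assms(1), of X \<pi> "\<lambda>s. 1 - \<pi> s"] X True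
        by (simp add: bernoulli_weight_def)
    next
      case False
      then have "prod g (S - X) = 0"
        using assms by (intro prod_zero) (auto simp: g_def)
      with False show ?thesis by simp
    qed
  qed
  finally show ?thesis by simp
qed

text \<open>Inclusion--exclusion over the avoided sets reduces this to the previous lemma for the
  unions \<open>E0 \<union> \<Union>(E ` X)\<close>, whose weights factor by disjointness.\<close>
lemma sum_bernoulli_weight_superset_avoiding:
  assumes S: "finite S" and E0: "E0 \<subseteq> S" and J: "finite J" and EJ: "\<And>j. j \<in> J \<Longrightarrow> E j \<subseteq> S"
    and disj0: "\<And>j. j \<in> J \<Longrightarrow> E0 \<inter> E j = {}"
    and disj: "\<And>j j'. j \<in> J \<Longrightarrow> j' \<in> J \<Longrightarrow> j \<noteq> j' \<Longrightarrow> E j \<inter> E j' = {}"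
  shows "(\<Sum>A\<in>Pow S. bernoulli_weight S \<pi> A *
            (of_bool (E0 \<subseteq> A) * (\<Prod>j\<in>J. 1 - of_bool (E j \<subseteq> A))))
       = prod \<pi> E0 * (\<Prod>j\<in>J. 1 - prod \<pi> (E j))"
proof -
  let ?W = "bernoulli_weight S \<pi>" and ?U = "\<lambda>X. E0 \<union> \<Union>(E ` X)"
  have finE: "finite (E j)" if "j \<in> J" for j
    using EJ[OF that] S finite_subset by blast
  have finE0: "finite E0"
    using E0 S finite_subset by blast
  have incl_excl: "of_bool (E0 \<subseteq> A) * (\<Prod>j\<in>J. 1 - of_bool (E j \<subseteq> A))
      = (\<Sum>X\<in>Pow J. (-1) ^ card X * (of_bool (?U X \<subseteq> A) :: real))" for A
  proof -
    have "(of_bool (E0 \<subseteq> A) * (\<Prod>j\<in>J. 1 - of_bool (E j \<subseteq> A)) :: real)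
       = (\<Sum>X\<in>Pow J. (-1) ^ card X * (of_bool (E0 \<subseteq> A) * (\<Prod>j\<in>X. of_bool (E j \<subseteq> A))))"
      by (simp add: prod_diff_conv_sum[OF J] sum_distrib_left mult_ac)
    also have "\<dots> = (\<Sum>X\<in>Pow J. (-1) ^ card X * of_bool (?U X \<subseteq> A))"
      using J by (intro sum.cong refl) (auto simp: prod_of_bool_eq finite_subset)
    finally show ?thesis .
  qed
  have "(\<Sum>A\<in>Pow S. ?W A * (of_bool (E0 \<subseteq> A) * (\<Prod>j\<in>J. 1 - of_bool (E j \<subseteq> A))))
      = (\<Sum>X\<in>Pow J. (-1) ^ card X * (\<Sum>A\<in>Pow S. ?W A * of_bool (?U X \<subseteq> A)))"
    by (simp add: incl_excl sum_distrib_left mult.left_commute sum.swap[of _ "Pow S"])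
  also have "\<dots> = (\<Sum>X\<in>Pow J. (-1) ^ card X * (prod \<pi> E0 * (\<Prod>j\<in>X. prod \<pi> (E j))))"
  proof (rule sum.cong[OF refl])
    fix X assume X: "X \<in> Pow J"
    then have finX: "finite X"
      using J finite_subset by blast
    have "(\<Sum>A\<in>Pow S. ?W A * of_bool (?U X \<subseteq> A)) = prod \<pi> (?U X)"
      using X E0 EJ by (intro sum_bernoulli_weight_superset[OF S]) auto
    also have "\<dots> = prod \<pi> E0 * prod \<pi> (\<Union>(E ` X))"
      by (rule prod.union_disjoint) (use finE0 finX finE X disj0 in auto)
    also have "prod \<pi> (\<Union>(E ` X)) = (\<Prod>j\<in>X. prod \<pi> (E j))"
      by (rule prod.UNION_disjoint) (use finX finE X disj in blast)+
    finally show "(-1) ^ card X * (\<Sum>A\<in>Pow S. ?W A * of_bool (?U X \<subseteq> A))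
        = (-1) ^ card X * (prod \<pi> E0 * (\<Prod>j\<in>X. prod \<pi> (E j)))" by simp
  qed
  also have "\<dots> = prod \<pi> E0 * (\<Prod>j\<in>J. 1 - prod \<pi> (E j))"
    by (simp add: prod_diff_conv_sum[OF J] sum_distrib_left mult_ac)
  finally show ?thesis .
qed

lemma outcome_weight_eq:
  "outcome_weight n p q D L =
     bernoulli_weight {..<n} p D * bernoulli_weight (offdiag n) (\<lambda>e. q (fst e) * q (snd e)) L"
  by (simp add: outcome_weight_def bernoulli_weight_def)

lemma finite_offdiag: "finite (offdiag n)"
  by (rule finite_subset[of _ "{..<n} \<times> {..<n}"]) (auto simp: offdiag_def)

definition candidate_techs :: "nat \<Rightarrow> nat \<Rightarrow> nat set \<Rightarrow> nat \<Rightarrow> nat set set" where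
  "candidate_techs n k P i =
     {t. t \<subseteq> {..<n} \<and> card t = k \<and> i \<in> t \<and> (\<forall>j\<in>t. j \<noteq> i \<longrightarrow> j \<notin> P)}"

definition learning_links :: "nat \<Rightarrow> nat set \<Rightarrow> (nat \<times> nat) set" where
  "learning_links j t = (\<lambda>l. (j, l)) ` (t - {j})"

definition reward_link_indicator :: "nat \<Rightarrow> nat set \<Rightarrow> nat \<Rightarrow> nat set \<Rightarrow> (nat \<times> nat) set \<Rightarrow> real" where
  "reward_link_indicator n P i t L =
     of_bool (learning_links i t \<subseteq> L) *
     (if i \<in> P then 1 else \<Prod>j\<in>{..<n} - {i}. 1 - of_bool (learning_links j t \<subseteq> L))"

text \<open>The probability that \<open>t\<close> is discovered, known to \<open>i\<close> and, unless \<open>i\<close> is patented,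
  known to no other firm.\<close>
definition reward_probability ::
  "nat \<Rightarrow> nat set \<Rightarrow> (nat \<Rightarrow> real) \<Rightarrow> (nat \<Rightarrow> real) \<Rightarrow> nat \<Rightarrow> nat set \<Rightarrow> real" where
  "reward_probability n P p q i t =
     prod p t * (\<Prod>l\<in>t - {i}. q i * q l) *
     (if i \<in> P then 1 else \<Prod>j\<in>{..<n} - {i}. 1 - (\<Prod>l\<in>t - {j}. q j * q l))"

lemma finite_candidate_techs: "finite (candidate_techs n k P i)"
  by (rule finite_subset[of _ "Pow {..<n}"]) (auto simp: candidate_techs_def)

lemma knows_iff_learning_links: "t \<subseteq> D \<Longrightarrow> knows D L j t \<longleftrightarrow> learning_links j t \<subseteq> L"
  unfolding knows_def learned_def learning_links_def by auto

lemma learning_links_subset_offdiag: "t \<subseteq> {..<n} \<Longrightarrow> j < n \<Longrightarrow> learning_links j t \<subseteq> offdiag n"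
  by (auto simp: learning_links_def offdiag_def)

lemma learning_links_disjoint: "j \<noteq> j' \<Longrightarrow> learning_links j t \<inter> learning_links j' t = {}"
  by (auto simp: learning_links_def)

lemma prod_learning_links:
  "(\<Prod>e\<in>learning_links j t. q (fst e) * q (snd e)) = (\<Prod>l\<in>t - {j}. q j * q l)"
  unfolding learning_links_def by (subst prod.reindex) (auto simp: inj_on_def)

lemma card_rewarded_techs:
  assumes "D \<subseteq> {..<n}"
  shows "real (card (rewarded_techs n k P D L i)) =
    (\<Sum>t\<in>candidate_techs n k P i. of_bool (t \<subseteq> D) * reward_link_indicator n P i t L)"
proof -
  let ?R = "\<lambda>t. t \<subseteq> D \<and> learning_links i t \<subseteq> L \<and>
              (i \<in> P \<or> (\<forall>j\<in>{..<n} - {i}. \<not> learning_links j t \<subseteq> L))"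
  have "rewarded_techs n k P D L i = candidate_techs n k P i \<inter> {t. ?R t}"
    using assms unfolding rewarded_techs_def candidate_techs_def
    by (auto simp: knows_iff_learning_links) blast
  then have "real (card (rewarded_techs n k P D L i)) = (\<Sum>t\<in>candidate_techs n k P i. of_bool (?R t))"
    by (simp add: finite_candidate_techs)
  also have "\<dots> = (\<Sum>t\<in>candidate_techs n k P i. of_bool (t \<subseteq> D) * reward_link_indicator n P i t L)"
  proof (rule sum.cong[OF refl])
    fix t
    have "(\<Prod>j\<in>{..<n} - {i}. 1 - of_bool (learning_links j t \<subseteq> L) :: real)
        = of_bool (\<forall>j\<in>{..<n} - {i}. \<not> learning_links j t \<subseteq> L)"
      by (simp add: prod_of_bool_eq[symmetric] of_bool_not_iff)
    then show "of_bool (?R t) = of_bool (t \<subseteq> D) * reward_link_indicator n P i t L"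
      by (auto simp: reward_link_indicator_def)
  qed
  finally show ?thesis .
qed

lemma expected_reward_link_indicator:
  assumes i: "i < n" and t: "t \<in> candidate_techs n k P i"
  shows "(\<Sum>L\<in>Pow (offdiag n). bernoulli_weight (offdiag n) (\<lambda>e. q (fst e) * q (snd e)) L *
            reward_link_indicator n P i t L)
       = (\<Prod>l\<in>t - {i}. q i * q l) *
         (if i \<in> P then 1 else \<Prod>j\<in>{..<n} - {i}. 1 - (\<Prod>l\<in>t - {j}. q j * q l))"
proof -
  have tn: "t \<subseteq> {..<n}"
    using t by (simp add: candidate_techs_def)
  note sub = learning_links_subset_offdiag[OF tn]
  show ?thesis
  proof (cases "i \<in> P")
    case True
    then show ?thesis
      using sum_bernoulli_weight_superset[OF finite_offdiag sub[OF i]]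
      by (simp add: reward_link_indicator_def prod_learning_links)
  next
    case False
    have "(\<Sum>L\<in>Pow (offdiag n). bernoulli_weight (offdiag n) (\<lambda>e. q (fst e) * q (snd e)) L *
            (of_bool (learning_links i t \<subseteq> L) *
             (\<Prod>j\<in>{..<n} - {i}. 1 - of_bool (learning_links j t \<subseteq> L))))
        = (\<Prod>e\<in>learning_links i t. q (fst e) * q (snd e)) *
          (\<Prod>j\<in>{..<n} - {i}. 1 - (\<Prod>e\<in>learning_links j t. q (fst e) * q (snd e)))"
      by (rule sum_bernoulli_weight_superset_avoiding[OF finite_offdiag sub[OF i]])
        (auto simp: sub learning_links_disjoint)
    with False show ?thesis
      by (simp add: reward_link_indicator_def prod_learning_links)
  qed
qed

lemma sum_sum_mult_sum_factor:
  fixes f :: "'a \<Rightarrow> real" and g :: "'b \<Rightarrow> real"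
  assumes "finite X" "finite Y" "finite T"
  shows "(\<Sum>x\<in>X. \<Sum>y\<in>Y. f x * g y * (\<Sum>t\<in>T. a t x * b t y))
       = (\<Sum>t\<in>T. (\<Sum>x\<in>X. f x * a t x) * (\<Sum>y\<in>Y. g y * b t y))"
proof -
  have "(\<Sum>x\<in>X. \<Sum>y\<in>Y. f x * g y * (\<Sum>t\<in>T. a t x * b t y))
      = (\<Sum>x\<in>X. \<Sum>y\<in>Y. \<Sum>t\<in>T. (f x * a t x) * (g y * b t y))"
    by (simp add: sum_distrib_left mult_ac)
  also have "\<dots> = (\<Sum>x\<in>X. \<Sum>t\<in>T. \<Sum>y\<in>Y. (f x * a t x) * (g y * b t y))"
    by (intro sum.cong refl sum.swap)
  also have "\<dots> = (\<Sum>t\<in>T. \<Sum>x\<in>X. \<Sum>y\<in>Y. (f x * a t x) * (g y * b t y))"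
    by (rule sum.swap)
  also have "\<dots> = (\<Sum>t\<in>T. (\<Sum>x\<in>X. f x * a t x) * (\<Sum>y\<in>Y. g y * b t y))"
    by (simp add: sum_product)
  finally show ?thesis .
qed

lemma payoff_eq_sum_reward_probability:
  assumes i: "i < n"
  shows "payoff n k c P p q i = (\<Sum>t\<in>candidate_techs n k P i. reward_probability n P p q i t) - c (p i)"
proof -
  let ?T = "candidate_techs n k P i" and ?\<pi> = "\<lambda>e. q (fst e) * q (snd e)"
  define a where "a t D = (of_bool (t \<subseteq> D) :: real)" for t D :: "nat set"
  have "(\<Sum>D\<in>Pow {..<n}. \<Sum>L\<in>Pow (offdiag n).
        outcome_weight n p q D L * real (card (rewarded_techs n k P D L i)))
      = (\<Sum>D\<in>Pow {..<n}. \<Sum>L\<in>Pow (offdiag n).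
           bernoulli_weight {..<n} p D * bernoulli_weight (offdiag n) ?\<pi> L * (\<Sum>t\<in>?T. a t D * reward_link_indicator n P i t L))"
    by (intro sum.cong refl) (simp add: outcome_weight_eq card_rewarded_techs a_def)
  also have "\<dots> = (\<Sum>t\<in>?T. (\<Sum>D\<in>Pow {..<n}. bernoulli_weight {..<n} p D * a t D) *
                          (\<Sum>L\<in>Pow (offdiag n). bernoulli_weight (offdiag n) ?\<pi> L * reward_link_indicator n P i t L))"
    by (rule sum_sum_mult_sum_factor) (auto simp: finite_candidate_techs finite_offdiag)
  also have "\<dots> = (\<Sum>t\<in>?T. reward_probability n P p q i t)"
  proof (rule sum.cong[OF refl])
    fix t assume t: "t \<in> ?T"
    then have "(\<Sum>D\<in>Pow {..<n}. bernoulli_weight {..<n} p D * a t D) = prod p t"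
      unfolding a_def by (intro sum_bernoulli_weight_superset) (auto simp: candidate_techs_def)
    then show "(\<Sum>D\<in>Pow {..<n}. bernoulli_weight {..<n} p D * a t D) *
               (\<Sum>L\<in>Pow (offdiag n). bernoulli_weight (offdiag n) ?\<pi> L * reward_link_indicator n P i t L)
             = reward_probability n P p q i t"
      unfolding expected_reward_link_indicator[OF i t] reward_probability_def by simp
  qed
  finally show ?thesis
    unfolding payoff_def by simp
qed

definition symmetric_profile :: "nat set \<Rightarrow> real \<Rightarrow> real \<Rightarrow> nat \<Rightarrow> real" where
  "symmetric_profile P x0 x1 j = (if j \<in> P then x1 else x0)"

lemma symmetric_investment_equilibrium_iff:
  "symmetric_investment_equilibrium n k c P p0 q0 p1 q1 \<longleftrightarrow>
     is_equilibrium n k c P (symmetric_profile P p0 p1) (symmetric_profile P q0 q1) \<and>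
     (\<forall>i<n. symmetric_profile P p0 p1 i > 0)"
  unfolding symmetric_investment_equilibrium_def symmetric_profile_def by (simp add: Let_def)

lemma symmetric_profile_upd_own:
  "i \<notin> P \<Longrightarrow> (symmetric_profile P x0 x1)(i := x0) = symmetric_profile P x0 x1"
  "i \<in> P \<Longrightarrow> (symmetric_profile P x0 x1)(i := x1) = symmetric_profile P x0 x1"
  by (auto simp: symmetric_profile_def)

lemma candidate_techsD:
  assumes "t \<in> candidate_techs n k P i"
  shows "finite t" "i \<in> t" "card t = k" "card (t - {i}) = k - 1"
  using assms finite_subset[of t "{..<n}"] by (auto simp: candidate_techs_def)

lemma candidate_tech_profile_others:
  "t \<in> candidate_techs n k P i \<Longrightarrow> l \<in> t - {i} \<Longrightarrow> ((symmetric_profile P x0 x1)(i := y)) l = x0"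
  by (auto simp: candidate_techs_def symmetric_profile_def)

lemma prod_const_mult: "(\<Prod>l\<in>A. a * f l) = a ^ card A * prod f A"
  by (simp add: prod.distrib)

lemma prod_candidate_tech_others:
  assumes t: "t \<in> candidate_techs n k P i"
  shows "prod ((symmetric_profile P x0 x1)(i := y)) (t - {i}) = x0 ^ (k - 1)"
  using candidate_tech_profile_others[OF t] candidate_techsD[OF t]
  by (simp add: prod.cong[OF refl, of _ _ "\<lambda>_. x0"])

lemma prod_candidate_tech:
  assumes t: "t \<in> candidate_techs n k P i"
  shows "prod ((symmetric_profile P x0 x1)(i := y)) t = y * x0 ^ (k - 1)"
proof -
  note t' = candidate_techsD[OF t]
  have "prod ((symmetric_profile P x0 x1)(i := y)) t
      = ((symmetric_profile P x0 x1)(i := y)) i * prod ((symmetric_profile P x0 x1)(i := y)) (t - {i})"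
    by (rule prod.remove) (use t' in auto)
  then show ?thesis
    by (simp only: prod_candidate_tech_others[OF t] fun_upd_same)
qed

lemma prod_candidate_tech_remove:
  assumes t: "t \<in> candidate_techs n k P i" and j: "j \<in> t - {i}"
  shows "prod ((symmetric_profile P x0 x1)(i := y)) (t - {j}) = y * x0 ^ (k - 2)"
proof -
  note t' = candidate_techsD[OF t]
  have "t - {j} = insert i (t - {i} - {j})"
    using t' j by auto
  moreover have "card (t - {i} - {j}) = k - 2"
    using t' j by simp
  ultimately show ?thesis
    using t' candidate_tech_profile_others[OF t, of _ x0 x1 y]
    by (simp add: prod.cong[OF refl, of "t - {i} - {j}" _ "\<lambda>_. x0"])
qed

lemma reward_probability_patented:
  assumes i: "i \<in> P" and t: "t \<in> candidate_techs n k P i"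
  shows "reward_probability n P ((symmetric_profile P p0 p1)(i := y))
           ((symmetric_profile P q0 q1)(i := x)) i t = y * p0 ^ (k - 1) * (x * q0) ^ (k - 1)"
  unfolding reward_probability_def prod_const_mult prod_candidate_tech[OF t]
    prod_candidate_tech_others[OF t] candidate_techsD[OF t]
  using i by (simp add: power_mult_distrib)

lemma prod_learning_member:
  assumes k: "k \<ge> 2" and t: "t \<in> candidate_techs n k P i" and j: "j \<in> t - {i}"
  shows "(\<Prod>l\<in>t - {j}. ((symmetric_profile P q0 q1)(i := x)) j * ((symmetric_profile P q0 q1)(i := x)) l)
       = x * q0 ^ (2 * k - 3)"
proof -
  have "card (t - {j}) = k - 1" "k - 1 + (k - 2) = 2 * k - 3"
    using candidate_techsD[OF t] j k by auto
  then show ?thesis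
    unfolding prod_const_mult prod_candidate_tech_remove[OF t j] candidate_tech_profile_others[OF t j]
    by (simp add: power_add[symmetric])
qed

lemma prod_learning_outsider:
  assumes t: "t \<in> candidate_techs n k P i" and j: "j \<notin> t"
  shows "(\<Prod>l\<in>t - {j}. ((symmetric_profile P q0 q1)(i := x)) j * ((symmetric_profile P q0 q1)(i := x)) l)
       = x * symmetric_profile P q0 q1 j ^ k * q0 ^ (k - 1)"
proof -
  have "t - {j} = t" "j \<noteq> i"
    using j candidate_techsD[OF t] by auto
  then show ?thesis
    unfolding prod_const_mult \<open>t - {j} = t\<close> prod_candidate_tech[OF t] fun_upd_other[OF \<open>j \<noteq> i\<close>]
    using candidate_techsD[OF t] by (simp add: mult_ac)
qed

lemma reward_probability_unpatented:
  assumes k: "k \<ge> 2" and P: "P \<subseteq> {..<n}" and i: "i < n" "i \<notin> P"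
    and t: "t \<in> candidate_techs n k P i"
  shows "reward_probability n P ((symmetric_profile P p0 p1)(i := y))
           ((symmetric_profile P q0 q1)(i := x)) i t
       = y * p0 ^ (k - 1) * (x * q0) ^ (k - 1) * (1 - x * q0 ^ (2 * k - 3)) ^ (k - 1)
         * (1 - x * q0 ^ (2 * k - 1)) ^ (card ({..<n} - P) - k) * (1 - x * q1 ^ k * q0 ^ (k - 1)) ^ card P"
proof -
  let ?q = "(symmetric_profile P q0 q1)(i := x)"
  define F where "F j = 1 - (\<Prod>l\<in>t - {j}. ?q j * ?q l)" for j
  define U where "U = {..<n} - P"
  note t' = candidate_techsD[OF t]
  have tU: "t \<subseteq> U"
    using t i by (auto simp: candidate_techs_def U_def)
  have finU: "finite U" "finite P"
    using P by (auto simp: U_def finite_subset)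
  have "{..<n} - {i} = (t - {i}) \<union> ((U - t) \<union> P)"
    using tU P t' by (auto simp: U_def)
  moreover have "prod F ((U - t) \<union> P) = prod F (U - t) * prod F P"
    by (rule prod.union_disjoint) (use finU in \<open>auto simp: U_def\<close>)
  moreover have "prod F ((t - {i}) \<union> ((U - t) \<union> P)) = prod F (t - {i}) * prod F ((U - t) \<union> P)"
    by (rule prod.union_disjoint) (use finU t' tU in \<open>auto simp: U_def\<close>)
  moreover have "prod F (t - {i}) = (1 - x * q0 ^ (2 * k - 3)) ^ (k - 1)"
  proof -
    have "F j = 1 - x * q0 ^ (2 * k - 3)" if "j \<in> t - {i}" for j
      unfolding F_def prod_learning_member[OF k t that] ..
    then show ?thesis
      using t' by simp
  qed
  moreover have "prod F (U - t) = (1 - x * q0 ^ (2 * k - 1)) ^ (card ({..<n} - P) - k)"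
  proof -
    have "F j = 1 - x * q0 ^ (2 * k - 1)" if "j \<in> U - t" for j
    proof -
      have "j \<notin> t" "j \<notin> P" "k + (k - 1) = 2 * k - 1"
        using that k by (auto simp: U_def)
      then show ?thesis
        unfolding F_def prod_learning_outsider[OF t \<open>j \<notin> t\<close>]
        by (simp add: symmetric_profile_def power_add[symmetric])
    qed
    moreover have "card (U - t) = card ({..<n} - P) - k"
      using tU finU t' by (simp add: card_Diff_subset U_def)
    ultimately show ?thesis
      by simp
  qed
  moreover have "prod F P = (1 - x * q1 ^ k * q0 ^ (k - 1)) ^ card P"
  proof -
    have "F j = 1 - x * q1 ^ k * q0 ^ (k - 1)" if "j \<in> P" for j
    proof -
      have "j \<notin> t"
        using that tU by (auto simp: U_def)
      then show ?thesis
        unfolding F_def prod_learning_outsider[OF t \<open>j \<notin> t\<close>]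
        using that by (simp add: symmetric_profile_def)
    qed
    then show ?thesis
      by simp
  qed
  moreover have "(\<Prod>j\<in>{..<n} - {i}. 1 - (\<Prod>l\<in>t - {j}. ?q j * ?q l)) = prod F ({..<n} - {i})"
    by (simp add: F_def)
  ultimately show ?thesis
    unfolding reward_probability_def if_not_P[OF i(2)]
    unfolding prod_const_mult prod_candidate_tech[OF t] prod_candidate_tech_others[OF t] t'
    by (simp add: power_mult_distrib mult_ac)
qed

definition openness_gain :: "nat \<Rightarrow> nat \<Rightarrow> nat \<Rightarrow> real \<Rightarrow> real \<Rightarrow> real \<Rightarrow> real" where
  "openness_gain k N m q0 q1 x =
     x ^ (k - 1) * (1 - x * q0 ^ (2 * k - 3)) ^ (k - 1) * (1 - x * q0 ^ (2 * k - 1)) ^ N *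
     (1 - x * q1 ^ k * q0 ^ (k - 1)) ^ m"

lemma payoff_patented_deviation:
  assumes "i < n" "i \<in> P"
  shows "payoff n k c P ((symmetric_profile P p0 p1)(i := y)) ((symmetric_profile P q0 q1)(i := x)) i
       = real (card (candidate_techs n k P i)) * (y * p0 ^ (k - 1) * (x * q0) ^ (k - 1)) - c y"
  using assms by (simp add: payoff_eq_sum_reward_probability reward_probability_patented)

lemma payoff_unpatented_deviation:
  assumes "k \<ge> 2" "P \<subseteq> {..<n}" "i < n" "i \<notin> P"
  shows "payoff n k c P ((symmetric_profile P p0 p1)(i := y)) ((symmetric_profile P q0 q1)(i := x)) i
       = real (card (candidate_techs n k P i)) * (y * p0 ^ (k - 1) * q0 ^ (k - 1) *
           openness_gain k (card ({..<n} - P) - k) (card P) q0 q1 x) - c y"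
  using assms
  by (simp add: payoff_eq_sum_reward_probability reward_probability_unpatented openness_gain_def
      power_mult_distrib mult_ac)

lemma candidate_techs_nonempty:
  assumes P: "P \<subseteq> {..<n}" and i: "i < n" and k: "k \<ge> 1"
    and U: "k - 1 \<le> card ({..<n} - P - {i})"
  shows "candidate_techs n k P i \<noteq> {}"
proof -
  obtain s where s: "s \<subseteq> {..<n} - P - {i}" "card s = k - 1" "finite s"
    using U by (rule obtain_subset_with_card_n)
  then have "insert i s \<in> candidate_techs n k P i"
    using i k by (auto simp: candidate_techs_def card_insert_if)
  then show ?thesis
    by blast
qed

lemma interior_max_first_order_condition:
  fixes q a b d :: real and K N m :: nat
  assumes q: "0 < q" "q < 1" and a: "0 \<le> a" "a \<le> 1" and b: "0 \<le> b" "b \<le> 1" and d: "0 \<le> d" "d \<le> 1"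
    and max: "\<And>x. 0 < x \<Longrightarrow> x < 1 \<Longrightarrow>
      x ^ K * (1 - x * a) ^ K * (1 - x * b) ^ N * (1 - x * d) ^ m
        \<le> q ^ K * (1 - q * a) ^ K * (1 - q * b) ^ N * (1 - q * d) ^ m"
  shows "K = K * (q * a) / (1 - q * a) + N * (q * b) / (1 - q * b) + m * (q * d) / (1 - q * d)"
proof -
  define h where "h x = K * ln x + K * ln (1 - x * a) + N * ln (1 - x * b) + m * ln (1 - x * d)" for x
  have pos: "0 < 1 - x * a" "0 < 1 - x * b" "0 < 1 - x * d" if "0 < x" "x < 1" for x
    using that a b d mult_strict_right_mono[of x 1] by (auto intro: le_less_trans[OF mult_left_le])
  have h_ln: "h x = ln (x ^ K * (1 - x * a) ^ K * (1 - x * b) ^ N * (1 - x * d) ^ m)" if "0 < x" "x < 1" for x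
    using pos[OF that] that by (simp add: h_def ln_mult ln_realpow)
  have local_max: "h x \<le> h q" if "\<bar>q - x\<bar> < min q (1 - q)" for x
  proof -
    have x: "0 < x" "x < 1"
      using that by auto
    show ?thesis
      unfolding h_ln[OF x] h_ln[OF q] using max[OF x] pos[OF x] pos[OF q] x q by simp
  qed
  have deriv: "DERIV h q :> K / q - K * a / (1 - q * a) - N * b / (1 - q * b) - m * d / (1 - q * d)"
    unfolding h_def using pos[OF q] q
    by (intro derivative_eq_intros refl) (simp_all, simp add: field_simps)
  have "K / q - K * a / (1 - q * a) - N * b / (1 - q * b) - m * d / (1 - q * d) = 0"
    by (rule DERIV_local_max[OF deriv, of "min q (1 - q)"]) (use q local_max in auto)
  then have "K / q = K * a / (1 - q * a) + N * b / (1 - q * b) + m * d / (1 - q * d)"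
    by simp
  then have "K = q * (K * a / (1 - q * a) + N * b / (1 - q * b) + m * d / (1 - q * d))"
    using q by (simp add: field_simps)
  then show ?thesis
    by (simp add: distrib_left mult.left_commute)
qed

locale symmetric_equilibrium =
  fixes n k :: nat and c :: "real \<Rightarrow> real" and P :: "nat set" and p0 q0 p1 q1 :: real
  assumes k: "k \<ge> 2"
    and P_subset: "P \<subseteq> {..<n}" and P_nonempty: "P \<noteq> {}"
    and card_unpatented: "k \<le> card ({..<n} - P)"
    and cost_zero: "c 0 = 0" and cost_strict_mono: "strict_mono_on {0..<1} c"
    and equilibrium: "symmetric_investment_equilibrium n k c P p0 q0 p1 q1"
begin

abbreviation N :: nat where "N \<equiv> card ({..<n} - P) - k"

lemma no_profitable_deviation:
  assumes "i < n" "0 \<le> y" "y < 1" "0 \<le> x" "x \<le> 1"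
  shows "payoff n k c P ((symmetric_profile P p0 p1)(i := y)) ((symmetric_profile P q0 q1)(i := x)) i
       \<le> payoff n k c P (symmetric_profile P p0 p1) (symmetric_profile P q0 q1) i"
  using equilibrium assms by (auto simp: symmetric_investment_equilibrium_iff is_equilibrium_def)

lemma no_profitable_deviation_unpatented:
  assumes "i < n" "i \<notin> P" "0 \<le> y" "y < 1" "0 \<le> x" "x \<le> 1"
  shows "payoff n k c P ((symmetric_profile P p0 p1)(i := y)) ((symmetric_profile P q0 q1)(i := x)) i
       \<le> payoff n k c P ((symmetric_profile P p0 p1)(i := p0)) ((symmetric_profile P q0 q1)(i := q0)) i"
  using no_profitable_deviation assms by (simp add: symmetric_profile_upd_own)

lemma no_profitable_deviation_patented:
  assumes "i < n" "i \<in> P" "0 \<le> y" "y < 1" "0 \<le> x" "x \<le> 1"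
  shows "payoff n k c P ((symmetric_profile P p0 p1)(i := y)) ((symmetric_profile P q0 q1)(i := x)) i
       \<le> payoff n k c P ((symmetric_profile P p0 p1)(i := p1)) ((symmetric_profile P q0 q1)(i := q1)) i"
  using no_profitable_deviation assms by (simp add: symmetric_profile_upd_own)

lemma obtain_unpatented:
  obtains i where "i < n" "i \<notin> P"
proof -
  have "{..<n} - P \<noteq> {}"
    using card_unpatented k by (metis card.empty not_numeral_le_zero order_trans le_zero_eq)
  then show ?thesis
    using that by blast
qed

lemma obtain_patented:
  obtains i where "i < n" "i \<in> P"
  using P_nonempty P_subset that by blast

lemma profile_bounds: "0 < p0" "p0 < 1" "0 \<le> q0" "q0 \<le> 1" "0 < p1" "p1 < 1" "0 \<le> q1" "q1 \<le> 1"
proof -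
  have bounds: "0 < symmetric_profile P p0 p1 i \<and> symmetric_profile P p0 p1 i < 1 \<and>
      0 \<le> symmetric_profile P q0 q1 i \<and> symmetric_profile P q0 q1 i \<le> 1" if "i < n" for i
    using equilibrium that by (simp add: symmetric_investment_equilibrium_iff is_equilibrium_def)
  obtain i0 where "i0 < n" "i0 \<notin> P"
    by (rule obtain_unpatented)
  with bounds[of i0] show "0 < p0" "p0 < 1" "0 \<le> q0" "q0 \<le> 1"
    by (auto simp: symmetric_profile_def)
  obtain i1 where "i1 < n" "i1 \<in> P"
    by (rule obtain_patented)
  with bounds[of i1] show "0 < p1" "p1 < 1" "0 \<le> q1" "q1 \<le> 1"
    by (auto simp: symmetric_profile_def)
qed

text \<open>Deviating to zero investment yields payoff \<open>- c 0 = 0\<close>, whereas \<open>c p0 > 0\<close>.\<close>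
lemma unpatented_gain_pos:
  assumes i: "i < n" "i \<notin> P"
  shows "0 < real (card (candidate_techs n k P i)) * (p0 * p0 ^ (k - 1) * q0 ^ (k - 1) *
           openness_gain k N (card P) q0 q1 q0)"
proof -
  have "payoff n k c P ((symmetric_profile P p0 p1)(i := 0)) ((symmetric_profile P q0 q1)(i := q0)) i
       \<le> payoff n k c P ((symmetric_profile P p0 p1)(i := p0)) ((symmetric_profile P q0 q1)(i := q0)) i"
    using no_profitable_deviation_unpatented[OF i] profile_bounds by simp
  moreover have "c 0 < c p0"
    using cost_strict_mono profile_bounds by (auto simp: strict_mono_on_def)
  ultimately show ?thesis
    using cost_zero by (simp add: payoff_unpatented_deviation[OF k P_subset i])
qed

lemma unpatented_openness_bounds: "0 < q0" "q0 < 1"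
proof -
  obtain i where i: "i < n" "i \<notin> P"
    by (rule obtain_unpatented)
  have "openness_gain k N (card P) q0 q1 q0 \<noteq> 0"
    using unpatented_gain_pos[OF i] by auto
  moreover have "openness_gain k N (card P) q0 q1 0 = 0" "openness_gain k N (card P) 1 q1 1 = 0"
    using k by (auto simp: openness_gain_def)
  ultimately show "0 < q0" "q0 < 1"
    using profile_bounds(3,4) by (metis order_le_less)+
qed

text \<open>A patented firm is paid for every technology it knows, so it opens up completely.\<close>
lemma patented_openness: "q1 = 1"
proof -
  obtain i where i: "i < n" "i \<in> P"
    by (rule obtain_patented)
  have "card ({..<n} - P - {i}) = card ({..<n} - P)"
    using i by simp
  then have "candidate_techs n k P i \<noteq> {}"
    using candidate_techs_nonempty[OF P_subset i(1)] k card_unpatented by simp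
  then have T: "0 < real (card (candidate_techs n k P i))"
    by (simp add: finite_candidate_techs card_gt_0_iff)
  have "payoff n k c P ((symmetric_profile P p0 p1)(i := p1)) ((symmetric_profile P q0 q1)(i := 1)) i
       \<le> payoff n k c P ((symmetric_profile P p0 p1)(i := p1)) ((symmetric_profile P q0 q1)(i := q1)) i"
    using no_profitable_deviation_patented[OF i] profile_bounds by simp
  then have "q0 ^ (k - 1) \<le> q1 ^ (k - 1) * q0 ^ (k - 1)"
    using T profile_bounds by (simp add: payoff_patented_deviation[OF i] power_mult_distrib)
  then have "1 \<le> q1 ^ (k - 1)"
    using unpatented_openness_bounds by simp
  then show "q1 = 1"
    using profile_bounds(7,8) k power_less_one_iff[of q1 "k - 1"] by fastforce
qed

lemma unpatented_openness_optimal: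
  assumes "0 \<le> x" "x \<le> 1"
  shows "openness_gain k N (card P) q0 q1 x \<le> openness_gain k N (card P) q0 q1 q0"
proof -
  obtain i where i: "i < n" "i \<notin> P"
    by (rule obtain_unpatented)
  have "payoff n k c P ((symmetric_profile P p0 p1)(i := p0)) ((symmetric_profile P q0 q1)(i := x)) i
       \<le> payoff n k c P ((symmetric_profile P p0 p1)(i := p0)) ((symmetric_profile P q0 q1)(i := q0)) i"
    using no_profitable_deviation_unpatented[OF i] profile_bounds assms by simp
  moreover have "card (candidate_techs n k P i) \<noteq> 0"
    using unpatented_gain_pos[OF i] by (metis of_nat_0 mult_zero_left less_irrefl)
  ultimately show ?thesis
    using profile_bounds unpatented_openness_bounds
    by (simp add: payoff_unpatented_deviation[OF k P_subset i])
qed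

lemma first_order_condition:
  "real (k - 1) = real (k - 1) * q0 ^ (2 * k - 2) / (1 - q0 ^ (2 * k - 2))
     + real N * (q0 ^ k)\<^sup>2 / (1 - (q0 ^ k)\<^sup>2) + real (card P) * q0 ^ k / (1 - q0 ^ k)"
proof -
  note q0 = unpatented_openness_bounds
  have le1: "q0 ^ j \<le> 1" for j
    using q0 by (simp add: power_le_one)
  have gain: "openness_gain k N (card P) q0 q1 x = x ^ (k - 1) * (1 - x * q0 ^ (2 * k - 3)) ^ (k - 1)
      * (1 - x * q0 ^ (2 * k - 1)) ^ N * (1 - x * q0 ^ (k - 1)) ^ card P" for x
    by (simp add: openness_gain_def patented_openness)
  have "real (k - 1) = real (k - 1) * (q0 * q0 ^ (2 * k - 3)) / (1 - q0 * q0 ^ (2 * k - 3))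
      + real N * (q0 * q0 ^ (2 * k - 1)) / (1 - q0 * q0 ^ (2 * k - 1))
      + real (card P) * (q0 * q0 ^ (k - 1)) / (1 - q0 * q0 ^ (k - 1))"
    using q0 le1 unpatented_openness_optimal
    by (intro interior_max_first_order_condition) (auto simp: gain)
  moreover have "q0 * q0 ^ (2 * k - 3) = q0 ^ (2 * k - 2)" "q0 * q0 ^ (2 * k - 1) = (q0 ^ k)\<^sup>2"
      "q0 * q0 ^ (k - 1) = q0 ^ k"
  proof -
    have "Suc (2 * k - 3) = 2 * k - 2" "Suc (2 * k - 1) = k * 2" "Suc (k - 1) = k"
      using k by auto
    then show "q0 * q0 ^ (2 * k - 3) = q0 ^ (2 * k - 2)" "q0 * q0 ^ (2 * k - 1) = (q0 ^ k)\<^sup>2"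
        "q0 * q0 ^ (k - 1) = q0 ^ k"
      unfolding power_Suc[symmetric] by (simp_all add: power_mult[symmetric] mult.commute)
  qed
  ultimately show ?thesis
    by simp
qed

end

lemma filterlim_at_top_of_density:
  fixes f :: "nat \<Rightarrow> real"
  assumes "(\<lambda>n. f n / real n) \<longlonglongrightarrow> b" "0 < b"
  shows "filterlim f at_top sequentially"
proof -
  have "filterlim (\<lambda>n. f n / real n * real n) at_top sequentially"
    using assms by (intro filterlim_tendsto_pos_mult_at_top filterlim_real_sequentially)
  moreover have "\<forall>\<^sub>F n in sequentially. f n / real n * real n = f n"
    using eventually_gt_at_top[of 0] by eventually_elim simp
  ultimately show ?thesis
    using filterlim_cong by fastforce
qed

lemma first_order_condition_bounds:
  fixes q N m K x :: real and k :: nat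
  defines "t1 \<equiv> K * q ^ (2 * k - 2) / (1 - q ^ (2 * k - 2))"
    and "t2 \<equiv> N * (q ^ k)\<^sup>2 / (1 - (q ^ k)\<^sup>2)"
  assumes k: "k \<ge> 2" and K: "0 < K" and q: "0 < q" "q < 1" and N: "0 \<le> N" "N \<le> x" and m: "0 < m"
    and foc: "K = t1 + t2 + m * q ^ k / (1 - q ^ k)"
  shows "(K - t1 - t2) * (1 - q ^ k) = m * q ^ k" "m * q ^ k \<le> K"
    and "0 \<le> t1" "t1 \<le> K * q ^ k / (1 - q ^ k)"
    and "0 \<le> t2" "t2 \<le> K * (x / m) * (q ^ k / (1 - (q ^ k)\<^sup>2))"
proof -
  define z where "z = q ^ k"
  have z: "0 < z" "z < 1" "z\<^sup>2 < 1"
    using q k by (auto simp: z_def power_less_one_iff)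
  have "0 < q ^ (2 * k - 2)" "q ^ (2 * k - 2) \<le> z"
    using q k unfolding z_def by (auto intro: power_decreasing)
  then show t1: "0 \<le> t1" "t1 \<le> K * q ^ k / (1 - q ^ k)"
    using z K unfolding t1_def z_def by (auto intro!: frac_le mult_left_mono)
  show t2: "0 \<le> t2"
    using N z unfolding t2_def z_def by auto
  show "(K - t1 - t2) * (1 - q ^ k) = m * q ^ k"
    using foc z by (simp add: z_def field_simps)
  have "m * z \<le> m * z / (1 - z)"
    using m z by (simp add: le_divide_eq mult_left_le)
  then show mz: "m * q ^ k \<le> K"
    using foc t1 t2 by (simp add: z_def)
  have "N * z \<le> (x / m) * (m * z)"
    using N z m by (simp add: mult_right_mono)
  also have "\<dots> \<le> (x / m) * K"
    using mz m N by (intro mult_left_mono) (auto simp: z_def)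
  finally have "N * z * (z / (1 - z\<^sup>2)) \<le> K * (x / m) * (z / (1 - z\<^sup>2))"
    using z by (intro mult_right_mono) (auto simp: mult.commute)
  then show "t2 \<le> K * (x / m) * (q ^ k / (1 - (q ^ k)\<^sup>2))"
    by (simp add: t2_def z_def power2_eq_square mult_ac)
qed

lemma first_order_condition_asymptotics:
  fixes q m N :: "nat \<Rightarrow> real" and K b :: real and k :: nat
  assumes k: "k \<ge> 2" and K: "K > 0" and b: "b > 0"
    and density: "(\<lambda>n. m n / real n) \<longlonglongrightarrow> b"
    and foc: "\<forall>\<^sub>F n in sequentially. 0 < q n \<and> q n < 1 \<and> 0 \<le> N n \<and> N n \<le> real n \<and>
      K = K * q n ^ (2 * k - 2) / (1 - q n ^ (2 * k - 2)) + N n * (q n ^ k)\<^sup>2 / (1 - (q n ^ k)\<^sup>2)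
          + m n * q n ^ k / (1 - q n ^ k)"
  shows "(\<lambda>n. real n * q n ^ k) \<longlonglongrightarrow> K / b"
proof -
  define z where "z n = q n ^ k" for n
  define t1 where "t1 n = K * q n ^ (2 * k - 2) / (1 - q n ^ (2 * k - 2))" for n
  define t2 where "t2 n = N n * (z n)\<^sup>2 / (1 - (z n)\<^sup>2)" for n
  have m_top: "filterlim m at_top sequentially"
    by (rule filterlim_at_top_of_density[OF density b])
  have ratio: "(\<lambda>n. real n / m n) \<longlonglongrightarrow> 1 / b"
    using tendsto_inverse[OF density] b by (simp add: inverse_eq_divide)
  have ev: "\<forall>\<^sub>F n in sequentially. 0 < m n \<and> 0 \<le> z n \<and> m n * z n \<le> K \<and>
      0 \<le> t1 n \<and> t1 n \<le> K * z n / (1 - z n) \<and>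
      0 \<le> t2 n \<and> t2 n \<le> K * (real n / m n) * (z n / (1 - (z n)\<^sup>2)) \<and>
      (K - t1 n - t2 n) * (1 - z n) = m n * z n"
    using foc eventually_gt_at_top[of 0] order_tendstoD(1)[OF density b]
  proof eventually_elim
    case (elim n)
    then have "0 < m n"
      by (simp add: zero_less_divide_iff)
    with elim show ?case
      using first_order_condition_bounds[OF k K, of "q n" "N n" "real n" "m n"]
      unfolding z_def t1_def t2_def by simp
  qed
  have z: "z \<longlonglongrightarrow> 0"
  proof (rule tendsto_sandwich[of "\<lambda>_. 0" _ _ "\<lambda>n. K / m n"])
    show "\<forall>\<^sub>F n in sequentially. 0 \<le> z n" "\<forall>\<^sub>F n in sequentially. z n \<le> K / m n"
      by (auto intro: eventually_mono[OF ev] simp: field_simps)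
    show "(\<lambda>n. K / m n) \<longlonglongrightarrow> 0"
      by (rule tendsto_divide_0[OF tendsto_const filterlim_at_top_imp_at_infinity[OF m_top]])
  qed simp
  have t1: "t1 \<longlonglongrightarrow> 0"
  proof (rule tendsto_sandwich[of "\<lambda>_. 0" _ _ "\<lambda>n. K * z n / (1 - z n)"])
    show "\<forall>\<^sub>F n in sequentially. 0 \<le> t1 n" "\<forall>\<^sub>F n in sequentially. t1 n \<le> K * z n / (1 - z n)"
      by (auto intro: eventually_mono[OF ev])
    show "(\<lambda>n. K * z n / (1 - z n)) \<longlonglongrightarrow> 0"
      using tendsto_divide[OF tendsto_mult[OF tendsto_const z] tendsto_diff[OF tendsto_const z]] by simp
  qed simp
  have t2: "t2 \<longlonglongrightarrow> 0"
  proof (rule tendsto_sandwich[of "\<lambda>_. 0" _ _ "\<lambda>n. K * (real n / m n) * (z n / (1 - (z n)\<^sup>2))"])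
    show "\<forall>\<^sub>F n in sequentially. 0 \<le> t2 n"
      "\<forall>\<^sub>F n in sequentially. t2 n \<le> K * (real n / m n) * (z n / (1 - (z n)\<^sup>2))"
      by (auto intro: eventually_mono[OF ev])
    have "(\<lambda>n. K * (real n / m n) * (z n / (1 - (z n)\<^sup>2))) \<longlonglongrightarrow> K * (1 / b) * (0 / (1 - 0\<^sup>2))"
      by (intro tendsto_mult tendsto_divide tendsto_diff tendsto_power tendsto_const ratio z) simp
    then show "(\<lambda>n. K * (real n / m n) * (z n / (1 - (z n)\<^sup>2))) \<longlonglongrightarrow> 0"
      by simp
  qed simp
  have "(\<lambda>n. (K - t1 n - t2 n) * (1 - z n)) \<longlonglongrightarrow> (K - 0 - 0) * (1 - 0)"
    using t1 t2 z by (intro tendsto_intros)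
  moreover have "\<forall>\<^sub>F n in sequentially. (K - t1 n - t2 n) * (1 - z n) = m n * z n"
    using ev by eventually_elim simp
  ultimately have "(\<lambda>n. m n * z n) \<longlonglongrightarrow> K"
    by (simp add: tendsto_cong)
  then have "(\<lambda>n. real n / m n * (m n * z n)) \<longlonglongrightarrow> 1 / b * K"
    using ratio by (intro tendsto_mult)
  moreover have "\<forall>\<^sub>F n in sequentially. real n / m n * (m n * z n) = real n * q n ^ k"
    using ev by eventually_elim (simp add: z_def)
  ultimately show ?thesis
    by (simp add: tendsto_cong)
qed

lemma powr_mult_power_root:
  fixes q x :: real and k :: nat
  assumes "0 < q" "0 \<le> x" "k > 0"
  shows "(x * q ^ k) powr (1 / real k) = q * x powr (1 / real k)"
  using assms by (simp add: powr_mult powr_realpow[symmetric] powr_powr)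

lemma density_complement:
  assumes "\<And>n. P n \<subseteq> {..<n}" "(\<lambda>n. real (card (P n)) / real n) \<longlonglongrightarrow> b"
  shows "(\<lambda>n. real (card ({..<n} - P n)) / real n) \<longlonglongrightarrow> 1 - b"
proof -
  have "(\<lambda>n. 1 - real (card (P n)) / real n) \<longlonglongrightarrow> 1 - b"
    using assms(2) by (intro tendsto_intros)
  moreover have "\<forall>\<^sub>F n in sequentially. 1 - real (card (P n)) / real n = real (card ({..<n} - P n)) / real n"
    using eventually_gt_at_top[of 0]
  proof eventually_elim
    case (elim n)
    have "card (P n) \<le> n"
      using card_mono[OF _ assms(1)] by fastforce
    then show ?case
      using elim assms(1)[of n] finite_subset[OF assms(1)[of n]]
      by (simp add: card_Diff_subset of_nat_diff field_simps)
  qed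
  ultimately show ?thesis
    by (rule Lim_transform_eventually)
qed

lemma eventually_symmetric_first_order_condition:
  fixes P :: "nat \<Rightarrow> nat set" and p0 q0 p1 q1 :: "nat \<Rightarrow> real"
  assumes k: "k \<ge> 2" and b: "0 < b" "b < 1"
    and cost: "c 0 = 0" "strict_mono_on {0..<1} c"
    and P: "\<And>n. P n \<subseteq> {..<n}" and density: "(\<lambda>n. real (card (P n)) / real n) \<longlonglongrightarrow> b"
    and eq: "\<forall>\<^sub>F n in sequentially. symmetric_investment_equilibrium n k c (P n) (p0 n) (q0 n) (p1 n) (q1 n)"
  shows "\<forall>\<^sub>F n in sequentially. 0 < q0 n \<and> q0 n < 1 \<and>
      0 \<le> real (card ({..<n} - P n) - k) \<and> real (card ({..<n} - P n) - k) \<le> real n \<and>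
      real (k - 1) = real (k - 1) * q0 n ^ (2 * k - 2) / (1 - q0 n ^ (2 * k - 2))
        + real (card ({..<n} - P n) - k) * (q0 n ^ k)\<^sup>2 / (1 - (q0 n ^ k)\<^sup>2)
        + real (card (P n)) * q0 n ^ k / (1 - q0 n ^ k)"
proof -
  have "filterlim (\<lambda>n. real (card (P n))) at_top sequentially"
       "filterlim (\<lambda>n. real (card ({..<n} - P n))) at_top sequentially"
    using density density_complement[OF P density] b by (auto intro: filterlim_at_top_of_density)
  then have "\<forall>\<^sub>F n in sequentially. 1 \<le> real (card (P n))"
      "\<forall>\<^sub>F n in sequentially. real k \<le> real (card ({..<n} - P n))"
    unfolding filterlim_at_top by blast+
  with eq show ?thesis
  proof eventually_elim
    case (elim n)
    interpret symmetric_equilibrium n k c "P n" "p0 n" "q0 n" "p1 n" "q1 n"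
      using elim k P cost by unfold_locales auto
    have "card ({..<n} - P n) - k \<le> n"
      using card_mono[of "{..<n}" "{..<n} - P n"] by auto
    then show ?case
      using unpatented_openness_bounds first_order_condition by simp
  qed
qed

theorem mainTheorem17:
  fixes k :: nat and b :: real and c :: "real \<Rightarrow> real"
    and P :: "nat \<Rightarrow> nat set" and p0 q0 p1 q1 :: "nat \<Rightarrow> real"
  assumes "k > 2"
    and "0 < b" and "b < 1"
    and "admissible_cost c"
    and "\<And>n. P n \<subseteq> {..<n}"
    and "(\<lambda>n. real (card (P n)) / real n) \<longlonglongrightarrow> b"
    and "eventually (\<lambda>n. symmetric_investment_equilibrium n k c (P n) (p0 n) (q0 n) (p1 n) (q1 n)) sequentially"
  shows "(\<lambda>n. q0 n * real n powr (1 / real k)) \<longlonglongrightarrow> ((real k - 1) / b) powr (1 / real k)"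
proof -
  have k: "k \<ge> 2"
    using assms(1) by simp
  have cost: "c 0 = 0" "strict_mono_on {0..<1} c"
    using assms(4) by (auto simp: admissible_cost_def)
  note foc = eventually_symmetric_first_order_condition[OF k assms(2,3) cost assms(5-7)]
  have "(\<lambda>n. real n * q0 n ^ k) \<longlonglongrightarrow> real (k - 1) / b"
    using first_order_condition_asymptotics[OF k _ assms(2,6) foc] k by simp
  then have "(\<lambda>n. (real n * q0 n ^ k) powr (1 / real k)) \<longlonglongrightarrow> (real (k - 1) / b) powr (1 / real k)"
    using k assms(2) by (intro tendsto_powr tendsto_const) auto
  moreover have "\<forall>\<^sub>F n in sequentially. (real n * q0 n ^ k) powr (1 / real k) = q0 n * real n powr (1 / real k)"
    using foc by eventually_elim (use k in \<open>auto intro: powr_mult_power_root\<close>)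
  ultimately show ?thesis
    using k by (simp add: tendsto_cong of_nat_diff)
qed

end
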